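(* Assume there are constants $\gamma_t\ge 0$ ($t=0,\dots,T-1$) with $|C_t(x)-C_t(y)|\le\gamma_t|x-y|$ for all $x,y$. If $0\le x-x'\le\theta$, $z_{k-1}<x\le z_k$ with $z_k\in Z_\theta$, and $t\in\{0,1,\dots,T-1\}$, then $V_t(x')-V_t(x)\le 2\bar\varphi_t(\theta,z_k)$.
   Context: Model. Fix an integer horizon $T\ge 2$, a discount factor $\alpha\in(0,1]$, and for $t=0,\dots,T-1$: unit ordering costs $c_t\in\mathbb R$, a salvage coefficient $c_T\in\mathbb R$, setup costs $K_t\ge 0$, functions $G_t:\mathbb R\to\mathbb R$, and independent nonnegative random demands $D_0,\dots,D_{T-1}$ with right-continuous distribution functions $F_t$ and finite means; all expectations appearing are assumed finite. Put $C_t(y)=(c_t-\alpha c_{t+1})y+G_t(y)+\alpha c_{t+1}E[D_t]$. Standing assumptions: (i) each $C_t$ is convex with $C_t(y)\to+\infty$ as $|y|\to\infty$; (ii) $K_t\ge \alpha K_{t+1}$ for $t=0,\dots,T-2$. Grid construction. Fix $\theta>0$, $z_m=m\theta$, $Z_\theta=\{z_m:m\in\mathbb Z\}$, $f_t(n)=F_t(z_{n+1})-F_t(z_n)$ ($n\ge -1$). $C^m_t=\min\{y: C_t(y)=\min_x C_t(x)\}$; with $z_{n_0}<C^m_t\le z_{n_0+1}$, $S^U_t=\min\{z_m\in Z_\theta: z_m\ge C^m_t,\ C_t(z_m)>C_t(z_{n_0})+K_t\}$. $s_{T-1}$ is a point with $s_{T-1}\le C^m_{T-1}$, $C_{T-1}(s_{T-1})=C_{T-1}(C^m_{T-1})+K_{T-1}$;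 $\bar I_{T-1}=s_{T-1}$. For $t=T-2,\dots,0$: $I_t=\max\{z_m\in Z_\theta: z_m<\min(\bar I_{t+1}-\theta,C^m_t)\}$, $\bar I_t=\max\{z_m\in Z_\theta: z_m\le I_t,\ C_t(z_m)>C_t(I_t)+K_t\}+\theta$. $H_{T-1}=C_{T-1}$, $S_{T-1}=C^m_{T-1}$; $V_t(y)=H_t(S_t)+K_t$ for $y<s_t$, $V_t(y)=H_t(y)$ for $y\ge s_t$. For $t=T-2,\dots,0$: $H_t(y)=C_t(y)+\alpha\sum_{n=-1}^\infty V_{t+1}(y-z_n)f_t(n)$; $S_t=\max\{z_m\in Z_\theta: I_t\le z_m\le S^U_t,\ H_t(z_m)=\min\{H_t(z_n):z_n\in Z_\theta, I_t\le z_n\le S^U_t\}\}$; $s_t=S_t$ if $K_t=0$, else $s_t=\min\{z_m\in Z_\theta:\bar I_t\le z_m\le S_t,\ H_t(z_m)\le H_t(S_t)+K_t\}$. Upper estimate functions. $\bar\psi_{T-1}(x,y)=\gamma_{T-1}x$; $\bar\varphi_{T-1}(x,y)=0$ if $y<s_{T-1}$ and $=\gamma_{T-1}x$ if $y\ge s_{T-1}$. For $t=0,\dots,T-2$, with $n$ the integer such that $z_{n-1}\le y-s_{t+1}<z_n$: $\bar\psi_t(x,y)=\gamma_tx$ if $y<s_{t+1}-\theta$, else $\bar\psi_t(x,y)=\gamma_tx+\alpha\sum_{m=-1}^{n-1}\bar\varphi_{t+1}(x,y-z_m)f_t(m)$; $\bar\varphi_t(x,y)=0$ if $y<s_t$,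 $=\bar\psi_t(y-s_t+\theta,y)$ if $y\ge s_t$ and $y-x<s_t$, $=\bar\psi_t(x,y)$ if $y\ge s_t$ and $y-x\ge s_t$. *)

theory Defs
  imports "HOL-Probability.Probability"
begin

definition zg :: "real \<Rightarrow> int \<Rightarrow> real" where
  "zg \<theta> m = real_of_int m * \<theta>"

definition Zg :: "real \<Rightarrow> real set" where
  "Zg \<theta> = range (zg \<theta>)"

definition cdf :: "real measure \<Rightarrow> real \<Rightarrow> real" where
  "cdf N x = measure N {..x}"

definition fg :: "real \<Rightarrow> real measure \<Rightarrow> int \<Rightarrow> real" where
  "fg \<theta> N n = cdf N (zg \<theta> (n + 1)) - cdf N (zg \<theta> n)"

definition Cfun :: "real \<Rightarrow> (nat \<Rightarrow> real) \<Rightarrow> (nat \<Rightarrow> real \<Rightarrow> real) \<Rightarrow> (nat \<Rightarrow> real measure)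
    \<Rightarrow> nat \<Rightarrow> real \<Rightarrow> real" where
  "Cfun \<alpha> c G M t y = (c t - \<alpha> * c (Suc t)) * y + G t y + \<alpha> * c (Suc t) * (\<integral>x. x \<partial>M t)"

definition Cmin :: "(real \<Rightarrow> real) \<Rightarrow> real" where
  "Cmin Ct = (LEAST y. \<forall>x. Ct y \<le> Ct x)"

definition zlow :: "real \<Rightarrow> (real \<Rightarrow> real) \<Rightarrow> real" where
  "zlow \<theta> Ct = (GREATEST x. x \<in> Zg \<theta> \<and> x < Cmin Ct)"

definition SUp :: "real \<Rightarrow> (real \<Rightarrow> real) \<Rightarrow> real \<Rightarrow> real" where
  "SUp \<theta> Ct Kt = (LEAST x. x \<in> Zg \<theta> \<and> Cmin Ct \<le> x \<and> Ct x > Ct (zlow \<theta> Ct) + Kt)"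

definition sLast :: "(real \<Rightarrow> real) \<Rightarrow> real \<Rightarrow> real" where
  "sLast Ct Kt = (SOME s. s \<le> Cmin Ct \<and> Ct s = Ct (Cmin Ct) + Kt)"

definition Istep :: "real \<Rightarrow> (real \<Rightarrow> real) \<Rightarrow> real \<Rightarrow> real" where
  "Istep \<theta> Ct barInext = (GREATEST x. x \<in> Zg \<theta> \<and> x < min (barInext - \<theta>) (Cmin Ct))"

definition barIstep :: "real \<Rightarrow> (real \<Rightarrow> real) \<Rightarrow> real \<Rightarrow> real \<Rightarrow> real" where
  "barIstep \<theta> Ct Kt barInext =
     (GREATEST x. x \<in> Zg \<theta> \<and> x \<le> Istep \<theta> Ct barInext
        \<and> Ct x > Ct (Istep \<theta> Ct barInext) + Kt) + \<theta>"

text \<open>Backward recursion indexed by j = T-1-t.\<close>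
primrec barIaux :: "real \<Rightarrow> (nat \<Rightarrow> real \<Rightarrow> real) \<Rightarrow> (nat \<Rightarrow> real) \<Rightarrow> nat \<Rightarrow> nat \<Rightarrow> real" where
  "barIaux \<theta> C K T 0 = sLast (C (T - 1)) (K (T - 1))"
| "barIaux \<theta> C K T (Suc j) = barIstep \<theta> (C (T - 2 - j)) (K (T - 2 - j)) (barIaux \<theta> C K T j)"

definition barI :: "real \<Rightarrow> (nat \<Rightarrow> real \<Rightarrow> real) \<Rightarrow> (nat \<Rightarrow> real) \<Rightarrow> nat \<Rightarrow> nat \<Rightarrow> real" where
  "barI \<theta> C K T t = barIaux \<theta> C K T (T - 1 - t)"

definition Igrid :: "real \<Rightarrow> (nat \<Rightarrow> real \<Rightarrow> real) \<Rightarrow> (nat \<Rightarrow> real) \<Rightarrow> nat \<Rightarrow> nat \<Rightarrow> real" where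
  "Igrid \<theta> C K T t = Istep \<theta> (C t) (barI \<theta> C K T (Suc t))"

text \<open>V from (H, S, s) and K: V(y) = H(S)+K for y < s, H(y) otherwise.\<close>
definition Vof :: "(real \<Rightarrow> real) \<times> real \<times> real \<Rightarrow> real \<Rightarrow> real \<Rightarrow> real" where
  "Vof HSs Kt y = (if y < snd (snd HSs) then fst HSs (fst (snd HSs)) + Kt else fst HSs y)"

text \<open>The triple (H_t, S_t, s_t), computed backward, indexed by j = T-1-t.
  fd t n stands for f_t(n); the sum over n \<ge> -1 is written with n = k - 1, k \<in> nat.\<close>
primrec HSsaux :: "real \<Rightarrow> real \<Rightarrow> (nat \<Rightarrow> real \<Rightarrow> real) \<Rightarrow> (nat \<Rightarrow> real) \<Rightarrow> (nat \<Rightarrow> int \<Rightarrow> real)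
    \<Rightarrow> nat \<Rightarrow> nat \<Rightarrow> (real \<Rightarrow> real) \<times> real \<times> real" where
  "HSsaux \<theta> \<alpha> C K fd T 0 = (C (T - 1), Cmin (C (T - 1)), sLast (C (T - 1)) (K (T - 1)))"
| "HSsaux \<theta> \<alpha> C K fd T (Suc j) =
     (let t = T - 2 - j;
          H = (\<lambda>y. C t y + \<alpha> * (\<Sum>k. Vof (HSsaux \<theta> \<alpha> C K fd T j) (K (Suc t)) (y - zg \<theta> (int k - 1))
                                      * fd t (int k - 1)));
          G = {x. x \<in> Zg \<theta> \<and> Igrid \<theta> C K T t \<le> x \<and> x \<le> SUp \<theta> (C t) (K t)};
          S = (GREATEST x. x \<in> G \<and> H x = Min (H ` G));
          s = (if K t = 0 then S
               else (LEAST x. x \<in> Zg \<theta> \<and> barI \<theta> C K T t \<le> x \<and> x \<le> S \<and> H x \<le> H S + K t))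
      in (H, S, s))"

definition Hf where "Hf \<theta> \<alpha> C K fd T t = fst (HSsaux \<theta> \<alpha> C K fd T (T - 1 - t))"
definition Sf where "Sf \<theta> \<alpha> C K fd T t = fst (snd (HSsaux \<theta> \<alpha> C K fd T (T - 1 - t)))"
definition sf where "sf \<theta> \<alpha> C K fd T t = snd (snd (HSsaux \<theta> \<alpha> C K fd T (T - 1 - t)))"

definition Vf :: "real \<Rightarrow> real \<Rightarrow> (nat \<Rightarrow> real \<Rightarrow> real) \<Rightarrow> (nat \<Rightarrow> real) \<Rightarrow> (nat \<Rightarrow> int \<Rightarrow> real)
    \<Rightarrow> nat \<Rightarrow> nat \<Rightarrow> real \<Rightarrow> real" where
  "Vf \<theta> \<alpha> C K fd T t y = Vof (HSsaux \<theta> \<alpha> C K fd T (T - 1 - t)) (K t) y"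

text \<open>psi-bar_t from phi-bar_{t+1} (phinext), s_{t+1} (snext), gamma_t, f_t.
  The integer n with z_{n-1} \<le> y - s_{t+1} < z_n is floor((y - s_{t+1})/theta) + 1.\<close>
definition psistep :: "real \<Rightarrow> real \<Rightarrow> real \<Rightarrow> (int \<Rightarrow> real) \<Rightarrow> real \<Rightarrow> (real \<Rightarrow> real \<Rightarrow> real)
    \<Rightarrow> real \<Rightarrow> real \<Rightarrow> real" where
  "psistep \<theta> \<alpha> \<gamma>t ft snext phinext x y =
     (if y < snext - \<theta> then \<gamma>t * x
      else (let n = \<lfloor>(y - snext) / \<theta>\<rfloor> + 1
            in \<gamma>t * x + \<alpha> * (\<Sum>m\<in>{-1..n - 1}. phinext x (y - zg \<theta> m) * ft m)))"

definition phistep :: "real \<Rightarrow> real \<Rightarrow> (real \<Rightarrow> real \<Rightarrow> real) \<Rightarrow> real \<Rightarrow> real \<Rightarrow> real" where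
  "phistep \<theta> st psi x y =
     (if y < st then 0
      else if y - x < st then psi (y - st + \<theta>) y
      else psi x y)"

text \<open>phi-bar_t, indexed by j = T-1-t; sv t = s_t.\<close>
primrec phiaux :: "real \<Rightarrow> real \<Rightarrow> (nat \<Rightarrow> real) \<Rightarrow> (nat \<Rightarrow> int \<Rightarrow> real) \<Rightarrow> (nat \<Rightarrow> real)
    \<Rightarrow> nat \<Rightarrow> nat \<Rightarrow> real \<Rightarrow> real \<Rightarrow> real" where
  "phiaux \<theta> \<alpha> \<gamma> fd sv T 0 = (\<lambda>x y. if y < sv (T - 1) then 0 else \<gamma> (T - 1) * x)"
| "phiaux \<theta> \<alpha> \<gamma> fd sv T (Suc j) =
     (let t = T - 2 - j
      in phistep \<theta> (sv t)
           (psistep \<theta> \<alpha> (\<gamma> t) (fd t) (sv (Suc t)) (phiaux \<theta> \<alpha> \<gamma> fd sv T j)))"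

definition phibar where "phibar \<theta> \<alpha> \<gamma> fd sv T t = phiaux \<theta> \<alpha> \<gamma> fd sv T (T - 1 - t)"

end

theory Submission
  imports Defs
begin

(*
  The bound is proved by backward induction on t, for every cell z_{k-1} < x <= z_k and every
  x' in [z_{k-2}, x]. In the last period V_{T-1} y = C_{T-1} (max y s_{T-1}), so Lipschitz
  continuity gives 2 gamma_{T-1} theta. For t < T - 1, H_t a - H_t x is C_t a - C_t x plus alpha
  times the expected drop of V_{t+1} over the cells shifted by the demand grid points; the induction
  hypothesis turns this into H_t a - H_t x <= C_t a - C_t x + 2 (psibar_t - gamma_t theta).
  Only the case x' < s_t <= x needs more: one has to bound H_t S_t + K_t - H_t x. Either a grid
  point a in {s_t, s_t - theta} of [z_{k-2}, x] has H_t S_t + K_t <= H_t a, or s_t = Ibar_t. In the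
  latter case H_t S_t + K_t <= H_t I_t + K_t < C_t (Ibar_t - theta) + (H_t - C_t) I_t, and H_t - C_t
  agrees at I_t and z_{k-2}, since V_{t+1} is constant left of s_{t+1} and both points lie more
  than theta below it.
*)

lemma zg_diff: "zg \<theta> a - zg \<theta> b = zg \<theta> (a - b)"
  by (simp add: zg_def algebra_simps)

lemma zg_minus_one: "zg \<theta> (m - 1) = zg \<theta> m - \<theta>"
  by (simp add: zg_def algebra_simps)

lemma zg_minus_two: "zg \<theta> (m - 2) = zg \<theta> m - 2 * \<theta>"
  by (simp add: zg_def algebra_simps)

lemma zg_less_iff: "\<theta> > 0 \<Longrightarrow> zg \<theta> a < zg \<theta> b \<longleftrightarrow> a < b"
  by (simp add: zg_def)

lemma zg_in_Zg [simp]: "zg \<theta> m \<in> Zg \<theta>"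
  by (simp add: Zg_def)

lemma Zg_minus_theta: "x \<in> Zg \<theta> \<Longrightarrow> x - \<theta> \<in> Zg \<theta>"
  by (auto simp: Zg_def zg_minus_one[symmetric])

lemma Zg_plus_theta: "x \<in> Zg \<theta> \<Longrightarrow> x + \<theta> \<in> Zg \<theta>"
  by (auto simp: Zg_def zg_def intro!: image_eqI[where x = "_ + 1"] simp: algebra_simps)

lemma Zg_less_imp_add_le:
  assumes "\<theta> > 0" "x \<in> Zg \<theta>" "y \<in> Zg \<theta>" "x < y"
  shows "x + \<theta> \<le> y"
proof -
  obtain a b where ab: "x = zg \<theta> a" "y = zg \<theta> b" using assms by (auto simp: Zg_def)
  with assms have "a + 1 \<le> b" by (simp add: zg_less_iff)
  then have "real_of_int (a + 1) * \<theta> \<le> real_of_int b * \<theta>"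
    using assms(1) by (intro mult_right_mono) simp_all
  with ab show ?thesis by (simp add: zg_def algebra_simps)
qed

lemma Zg_ge_of_gt_pred:
  "\<theta> > 0 \<Longrightarrow> x \<in> Zg \<theta> \<Longrightarrow> zg \<theta> (m - 1) < x \<Longrightarrow> zg \<theta> m \<le> x"
  using Zg_less_imp_add_le[of \<theta> "zg \<theta> (m - 1)" x, OF _ zg_in_Zg] by (simp add: zg_minus_one)

lemma exists_zg_le: "\<theta> > 0 \<Longrightarrow> \<exists>m. zg \<theta> m \<le> v"
  by (rule exI[of _ "\<lfloor>v / \<theta>\<rfloor>"]) (simp add: zg_def, metis floor_divide_lower)

lemma exists_zg_ge: "\<theta> > 0 \<Longrightarrow> \<exists>m. v \<le> zg \<theta> m"
  by (rule exI[of _ "\<lceil>v / \<theta>\<rceil>"]) (simp add: zg_def, metis ceiling_divide_upper)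

lemma finite_Zg_Icc:
  assumes "\<theta> > 0" shows "finite (Zg \<theta> \<inter> {a..b})"
proof (rule finite_subset)
  show "Zg \<theta> \<inter> {a..b} \<subseteq> zg \<theta> ` {\<lceil>a / \<theta>\<rceil>..\<lfloor>b / \<theta>\<rfloor>}"
  proof
    fix x assume "x \<in> Zg \<theta> \<inter> {a..b}"
    then obtain m where "x = zg \<theta> m" "a \<le> real_of_int m * \<theta>" "real_of_int m * \<theta> \<le> b"
      by (auto simp: Zg_def zg_def)
    with assms show "x \<in> zg \<theta> ` {\<lceil>a / \<theta>\<rceil>..\<lfloor>b / \<theta>\<rfloor>}"
      by (auto simp: ceiling_le_iff le_floor_iff pos_divide_le_eq pos_le_divide_eq)
  qed
qed simp

lemma Zg_Greatest:
  assumes "\<theta> > 0" "Q x0" "\<And>x. Q x \<Longrightarrow> x \<in> Zg \<theta> \<and> x \<le> b"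
  shows "Q (Greatest Q)" and "\<And>y. Q y \<Longrightarrow> y \<le> Greatest Q"
proof -
  define S where "S = {x. Q x \<and> x0 \<le> x}"
  have "finite S"
    by (rule finite_subset[OF _ finite_Zg_Icc[OF assms(1), of x0 b]]) (auto simp: S_def dest: assms(3))
  moreover have "x0 \<in> S" using assms(2) by (simp add: S_def)
  ultimately have "Max S \<in> S" using Max_in by blast
  have upper: "y \<le> Max S" if "Q y" for y
  proof (cases "x0 \<le> y")
    case True
    with that \<open>finite S\<close> show ?thesis by (auto simp: S_def intro!: Max_ge)
  qed (use Max_ge[OF \<open>finite S\<close> \<open>x0 \<in> S\<close>] in linarith)
  with \<open>Max S \<in> S\<close> have "Greatest Q = Max S" by (intro Greatest_equality) (auto simp: S_def)
  with \<open>Max S \<in> S\<close> upper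
  show "Q (Greatest Q)" "\<And>y. Q y \<Longrightarrow> y \<le> Greatest Q" by (auto simp: S_def)
qed

lemma Zg_Least:
  assumes "\<theta> > 0" "Q x0" "\<And>x. Q x \<Longrightarrow> x \<in> Zg \<theta> \<and> b \<le> x"
  shows "Q (Least Q)" and "\<And>y. Q y \<Longrightarrow> Least Q \<le> y"
proof -
  define S where "S = {x. Q x \<and> x \<le> x0}"
  have "finite S"
    by (rule finite_subset[OF _ finite_Zg_Icc[OF assms(1), of b x0]]) (auto simp: S_def dest: assms(3))
  moreover have "x0 \<in> S" using assms(2) by (simp add: S_def)
  ultimately have "Min S \<in> S" using Min_in by blast
  have lower: "Min S \<le> y" if "Q y" for y
  proof (cases "y \<le> x0")
    case True
    with that \<open>finite S\<close> show ?thesis by (auto simp: S_def intro!: Min_le)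
  qed (use Min_le[OF \<open>finite S\<close> \<open>x0 \<in> S\<close>] in linarith)
  with \<open>Min S \<in> S\<close> have "Least Q = Min S" by (intro Least_equality) (auto simp: S_def)
  with \<open>Min S \<in> S\<close> lower
  show "Q (Least Q)" "\<And>y. Q y \<Longrightarrow> Least Q \<le> y" by (auto simp: S_def)
qed

lemma Istep_in_Zg: "\<theta> > 0 \<Longrightarrow> Istep \<theta> Ct v \<in> Zg \<theta>"
  and Istep_less: "\<theta> > 0 \<Longrightarrow> Istep \<theta> Ct v < min (v - \<theta>) (Cmin Ct)"
proof -
  assume "\<theta> > 0"
  let ?Q = "\<lambda>x. x \<in> Zg \<theta> \<and> x < min (v - \<theta>) (Cmin Ct)"
  obtain m where "zg \<theta> m \<le> min (v - \<theta>) (Cmin Ct) - 1"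
    using exists_zg_le[OF \<open>\<theta> > 0\<close>] by blast
  then have "?Q (Greatest ?Q)"
    by (intro Zg_Greatest(1)[OF \<open>\<theta> > 0\<close>, of ?Q "zg \<theta> m" "v - \<theta>"]) auto
  then show "Istep \<theta> Ct v \<in> Zg \<theta>" "Istep \<theta> Ct v < min (v - \<theta>) (Cmin Ct)"
    unfolding Istep_def by simp_all
qed

lemma barIstep_bounds:
  assumes "\<theta> > 0" "Kt \<ge> 0" "filterlim Ct at_top at_bot"
  shows "barIstep \<theta> Ct Kt v \<in> Zg \<theta>" "barIstep \<theta> Ct Kt v \<le> Istep \<theta> Ct v"
    "Ct (barIstep \<theta> Ct Kt v - \<theta>) > Ct (Istep \<theta> Ct v) + Kt"
proof -
  let ?I = "Istep \<theta> Ct v"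
  let ?Q = "\<lambda>x. x \<in> Zg \<theta> \<and> x \<le> ?I \<and> Ct x > Ct ?I + Kt"
  have "eventually (\<lambda>y. Ct y > Ct ?I + Kt) at_bot"
    using assms(3) by (simp add: filterlim_at_top_dense)
  then obtain b where b: "\<And>y. y \<le> b \<Longrightarrow> Ct y > Ct ?I + Kt"
    by (auto simp: eventually_at_bot_linorder)
  obtain m where "zg \<theta> m \<le> min b ?I" using exists_zg_le[OF assms(1)] by blast
  with b have "?Q (zg \<theta> m)" by simp
  then have Q: "?Q (Greatest ?Q)" by (rule Zg_Greatest(1)[OF assms(1)]) blast
  with assms(2) have "Greatest ?Q \<noteq> ?I" by force
  with Q have "Greatest ?Q < ?I" by simp
  with Q have "Greatest ?Q + \<theta> \<le> ?I"
    using Zg_less_imp_add_le[OF assms(1)] Istep_in_Zg[OF assms(1)] by blast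
  moreover have "barIstep \<theta> Ct Kt v = Greatest ?Q + \<theta>" unfolding barIstep_def by simp
  ultimately show "barIstep \<theta> Ct Kt v \<in> Zg \<theta>" "barIstep \<theta> Ct Kt v \<le> ?I"
    "Ct (barIstep \<theta> Ct Kt v - \<theta>) > Ct ?I + Kt"
    using Q Zg_plus_theta by auto
qed

lemma Cmin_le_SUp:
  assumes "\<theta> > 0" "filterlim Ct at_top at_top" shows "Cmin Ct \<le> SUp \<theta> Ct Kt"
proof -
  let ?c = "Ct (zlow \<theta> Ct) + Kt"
  let ?Q = "\<lambda>x. x \<in> Zg \<theta> \<and> Cmin Ct \<le> x \<and> Ct x > ?c"
  have "eventually (\<lambda>y. Ct y > ?c) at_top"
    using assms(2) by (simp add: filterlim_at_top_dense)
  then obtain b where b: "\<And>y. y \<ge> b \<Longrightarrow> Ct y > ?c" by (auto simp: eventually_at_top_linorder)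
  obtain m where "max b (Cmin Ct) \<le> zg \<theta> m" using exists_zg_ge[OF assms(1)] by blast
  with b have "?Q (zg \<theta> m)" by simp
  then have "?Q (Least ?Q)" by (rule Zg_Least(1)[OF assms(1)]) blast
  then show ?thesis unfolding SUp_def by simp
qed

lemma C_sLast:
  assumes "Kt \<ge> 0" "filterlim Ct at_top at_bot" "continuous_on UNIV Ct"
  shows "Ct (sLast Ct Kt) = Ct (Cmin Ct) + Kt"
proof -
  let ?c = "Cmin Ct"
  have "eventually (\<lambda>y. Ct y > Ct ?c + Kt) at_bot"
    using assms(2) by (simp add: filterlim_at_top_dense)
  then obtain b where "\<And>y. y \<le> b \<Longrightarrow> Ct y > Ct ?c + Kt"
    by (auto simp: eventually_at_bot_linorder)
  then have "Ct ?c + Kt \<le> Ct (min b ?c)" by (simp add: less_imp_le)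
  then have "\<exists>s\<ge>min b ?c. s \<le> ?c \<and> Ct s = Ct ?c + Kt"
    using assms(1) by (intro IVT2') (auto intro: continuous_on_subset[OF assms(3)])
  then have "\<exists>s. s \<le> ?c \<and> Ct s = Ct ?c + Kt" by blast
  then show ?thesis unfolding sLast_def by (metis (mono_tags, lifting) someI_ex)
qed

lemma sums_shift_int:
  fixes g :: "int \<Rightarrow> real"
  assumes "\<And>m. N < m \<Longrightarrow> g m = 0"
  shows "(\<lambda>n. g (int n - 1)) sums (\<Sum>m\<in>{-1..N}. g m)"
proof -
  let ?h = "\<lambda>n::nat. int n - 1"
  have inj: "inj_on ?h {..<nat (N + 2)}" by (auto simp: inj_on_def)
  have img: "?h ` {..<nat (N + 2)} = {-1..N}"
  proof
    show "{-1..N} \<subseteq> ?h ` {..<nat (N + 2)}"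
    proof
      fix m assume "m \<in> {-1..N}"
      then have "m = ?h (nat (m + 1))" "nat (m + 1) < nat (N + 2)" by auto
      then show "m \<in> ?h ` {..<nat (N + 2)}" by blast
    qed
  qed auto
  have "(\<lambda>n. g (?h n)) sums (\<Sum>n<nat (N + 2). g (?h n))"
    by (rule sums_finite) (auto intro: assms)
  also have "(\<Sum>n<nat (N + 2). g (?h n)) = (\<Sum>m\<in>{-1..N}. g m)"
    using sum.reindex[OF inj, of g] img by simp
  finally show ?thesis .
qed

lemma psistep_eq_sum:
  assumes "\<theta> > 0"
  shows "psistep \<theta> \<alpha> \<gamma>t ft s \<phi> x y
           = \<gamma>t * x + \<alpha> * (\<Sum>m\<in>{-1..\<lfloor>(y - s) / \<theta>\<rfloor>}. \<phi> x (y - zg \<theta> m) * ft m)"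
proof (cases "y < s - \<theta>")
  case True
  with assms have "(y - s) / \<theta> < -1" by (simp add: divide_less_eq)
  then have "\<lfloor>(y - s) / \<theta>\<rfloor> < -1" by linarith
  then have "{-1..\<lfloor>(y - s) / \<theta>\<rfloor>} = {}" by auto
  with True show ?thesis by (simp add: psistep_def)
qed (simp add: psistep_def)

lemma fg_nonneg:
  assumes "finite_measure N" "sets N = sets borel" "\<theta> > 0"
  shows "fg \<theta> N n \<ge> 0"
proof -
  interpret finite_measure N by fact
  have "measure N {..zg \<theta> n} \<le> measure N {..zg \<theta> (n + 1)}"
    by (rule finite_measure_mono) (use assms in \<open>auto simp: zg_def\<close>)
  then show ?thesis by (simp add: fg_def cdf_def)
qed

section \<open>The backward recursion\<close>

locale grid_inventory =
  fixes \<theta> \<alpha> :: real and T :: nat and C :: "nat \<Rightarrow> real \<Rightarrow> real" and K \<gamma> :: "nat \<Rightarrow> real"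
    and fd :: "nat \<Rightarrow> int \<Rightarrow> real"
  assumes theta_pos: "\<theta> > 0" and alpha_nonneg: "\<alpha> \<ge> 0" and T_pos: "T > 0"
    and K_nonneg: "\<And>t. t < T \<Longrightarrow> K t \<ge> 0"
    and C_lipschitz: "\<And>t u v. t < T \<Longrightarrow> \<bar>C t u - C t v\<bar> \<le> \<gamma> t * \<bar>u - v\<bar>"
    and C_at_top: "\<And>t. t < T \<Longrightarrow> filterlim (C t) at_top at_top"
    and C_at_bot: "\<And>t. t < T \<Longrightarrow> filterlim (C t) at_top at_bot"
    and fd_nonneg: "\<And>t n. t + 2 \<le> T \<Longrightarrow> fd t n \<ge> 0"
    and V_summable: "\<And>t y. t + 2 \<le> T \<Longrightarrow>
          summable (\<lambda>n. Vf \<theta> \<alpha> C K fd T (Suc t) (y - zg \<theta> (int n - 1)) * fd t (int n - 1))"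
begin

abbreviation "z \<equiv> zg \<theta>"
abbreviation "V \<equiv> Vf \<theta> \<alpha> C K fd T"
abbreviation "H \<equiv> Hf \<theta> \<alpha> C K fd T"
abbreviation "S \<equiv> Sf \<theta> \<alpha> C K fd T"
abbreviation "s \<equiv> sf \<theta> \<alpha> C K fd T"
abbreviation "I \<equiv> Igrid \<theta> C K T"
abbreviation "Ibar \<equiv> barI \<theta> C K T"
abbreviation "S_range t \<equiv> Zg \<theta> \<inter> {I t..SUp \<theta> (C t) (K t)}"
abbreviation "phi \<equiv> phibar \<theta> \<alpha> \<gamma> fd s T"
abbreviation "psi t \<equiv> psistep \<theta> \<alpha> (\<gamma> t) (fd t) (s (Suc t)) (phi (Suc t))"

lemma gamma_nonneg: "t < T \<Longrightarrow> \<gamma> t \<ge> 0"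
  using C_lipschitz[of t 1 0] by simp

lemma C_diff_le: "t < T \<Longrightarrow> C t u - C t v \<le> \<gamma> t * \<bar>u - v\<bar>"
  using C_lipschitz[of t u v] by simp

lemma V_eq: "V t y = (if y < s t then H t (S t) + K t else H t y)"
  by (simp add: Vf_def Vof_def Hf_def Sf_def sf_def)

lemma last_period:
  "H (T - 1) = C (T - 1)" "S (T - 1) = Cmin (C (T - 1))"
  "s (T - 1) = sLast (C (T - 1)) (K (T - 1))" "Ibar (T - 1) = s (T - 1)"
  by (simp_all add: Hf_def Sf_def sf_def barI_def)

lemma index_shift:
  assumes "t < T - 1" shows "T - 1 - t = Suc (T - 1 - Suc t)" "T - 2 - (T - 1 - Suc t) = t"
  using assms by auto

lemma Ibar_step: "t < T - 1 \<Longrightarrow> Ibar t = barIstep \<theta> (C t) (K t) (Ibar (Suc t))"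
  unfolding barI_def by (simp only: index_shift barIaux.simps)

lemma HSsaux_step:
  assumes "t < T - 1"
  shows "HSsaux \<theta> \<alpha> C K fd T (T - 1 - t) =
     (let H = (\<lambda>y. C t y + \<alpha> * (\<Sum>n. V (Suc t) (y - z (int n - 1)) * fd t (int n - 1)));
          S = (GREATEST x. x \<in> S_range t \<and> H x = Min (H ` S_range t))
      in (H, S, if K t = 0 then S
                else (LEAST x. x \<in> Zg \<theta> \<and> Ibar t \<le> x \<and> x \<le> S \<and> H x \<le> H S + K t)))"
proof -
  have "{x. x \<in> Zg \<theta> \<and> I t \<le> x \<and> x \<le> SUp \<theta> (C t) (K t)} = S_range t" by auto
  then show ?thesis
    using assms unfolding Vf_def by (simp only: index_shift HSsaux.simps Let_def Igrid_def)
qed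

lemma H_eq: "t < T - 1 \<Longrightarrow>
    H t = (\<lambda>y. C t y + \<alpha> * (\<Sum>n. V (Suc t) (y - z (int n - 1)) * fd t (int n - 1)))"
  unfolding Hf_def by (simp only: HSsaux_step Let_def fst_conv)

lemma S_eq: "t < T - 1 \<Longrightarrow> S t = (GREATEST x. x \<in> S_range t \<and> H t x = Min (H t ` S_range t))"
  unfolding Sf_def by (simp only: HSsaux_step H_eq Let_def fst_conv snd_conv)

lemma s_eq: "t < T - 1 \<Longrightarrow> s t = (if K t = 0 then S t
    else (LEAST x. x \<in> Zg \<theta> \<and> Ibar t \<le> x \<and> x \<le> S t \<and> H t x \<le> H t (S t) + K t))"
  unfolding sf_def by (simp only: HSsaux_step H_eq S_eq Let_def fst_conv snd_conv)

lemma I_in_Zg: "I t \<in> Zg \<theta>"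
  unfolding Igrid_def by (rule Istep_in_Zg[OF theta_pos])

lemma I_add_theta_less: "I t + \<theta> < Ibar (Suc t)"
  using Istep_less[OF theta_pos, of "C t" "Ibar (Suc t)"] unfolding Igrid_def by simp

lemma I_in_S_range:
  assumes "t < T" shows "I t \<in> S_range t"
proof -
  have "I t < Cmin (C t)"
    using Istep_less[OF theta_pos, of "C t" "Ibar (Suc t)"] unfolding Igrid_def by simp
  with Cmin_le_SUp[OF theta_pos C_at_top[OF assms], of "K t"] I_in_Zg show ?thesis by simp
qed

lemma Ibar_in_Zg: "t < T - 1 \<Longrightarrow> Ibar t \<in> Zg \<theta>"
  and Ibar_le_I: "t < T - 1 \<Longrightarrow> Ibar t \<le> I t"
  and C_Ibar_minus_theta: "t < T - 1 \<Longrightarrow> C t (Ibar t - \<theta>) > C t (I t) + K t"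
proof -
  assume t: "t < T - 1"
  then have "t < T" by simp
  note barIstep_bounds[OF theta_pos K_nonneg[OF this] C_at_bot[OF this], of "Ibar (Suc t)"]
  then show "Ibar t \<in> Zg \<theta>" "Ibar t \<le> I t" "C t (Ibar t - \<theta>) > C t (I t) + K t"
    unfolding Ibar_step[OF t] Igrid_def by simp_all
qed

lemma S_in_S_range: "t < T - 1 \<Longrightarrow> S t \<in> S_range t"
  and H_S_le_H_I: "t < T - 1 \<Longrightarrow> H t (S t) \<le> H t (I t)"
proof -
  assume "t < T - 1"
  then have fin: "finite (S_range t)" and I: "I t \<in> S_range t"
    using finite_Zg_Icc[OF theta_pos] I_in_S_range by auto
  let ?m = "Min (H t ` S_range t)"
  let ?Q = "\<lambda>x. x \<in> S_range t \<and> H t x = ?m"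
  obtain x0 where "?Q x0" using Min_in[of "H t ` S_range t"] fin I by fastforce
  then have "?Q (Greatest ?Q)" by (rule Zg_Greatest(1)[OF theta_pos, of ?Q]) auto
  moreover have "?m \<le> H t (I t)" using fin I by simp
  ultimately show "S t \<in> S_range t" "H t (S t) \<le> H t (I t)"
    using S_eq[OF \<open>t < T - 1\<close>] by simp_all
qed

lemma Ibar_le_S: "t < T - 1 \<Longrightarrow> Ibar t \<le> S t"
  using S_in_S_range Ibar_le_I by force

lemma s_in_Zg: "t < T - 1 \<Longrightarrow> s t \<in> Zg \<theta>"
  and Ibar_le_s: "t < T - 1 \<Longrightarrow> Ibar t \<le> s t"
  and H_below_s: "t < T - 1 \<Longrightarrow> K t \<noteq> 0 \<Longrightarrow> y \<in> Zg \<theta> \<Longrightarrow> Ibar t \<le> y \<Longrightarrow> y < s t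
                    \<Longrightarrow> H t y > H t (S t) + K t"
proof -
  assume t: "t < T - 1"
  let ?Q = "\<lambda>x. x \<in> Zg \<theta> \<and> Ibar t \<le> x \<and> x \<le> S t \<and> H t x \<le> H t (S t) + K t"
  have "?Q (S t)" using t S_in_S_range Ibar_le_S K_nonneg[of t] by auto
  note least = Zg_Least[of \<theta> ?Q "S t" "Ibar t", OF theta_pos this]
  have "?Q (s t)" using least(1) s_eq[OF t] \<open>?Q (S t)\<close> by (cases "K t = 0") auto
  then show "s t \<in> Zg \<theta>" "Ibar t \<le> s t" by simp_all
  show "H t y > H t (S t) + K t"
    if "K t \<noteq> 0" "y \<in> Zg \<theta>" "Ibar t \<le> y" "y < s t"
    using that least(2)[of y] s_eq[OF t] \<open>?Q (s t)\<close> by force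
qed

lemma s_eq_S: "t < T - 1 \<Longrightarrow> K t = 0 \<Longrightarrow> s t = S t"
  by (simp add: s_eq)

lemma phi_last: "phi (T - 1) x y = (if y < s (T - 1) then 0 else \<gamma> (T - 1) * x)"
  by (simp add: phibar_def)

lemma phi_step: "t < T - 1 \<Longrightarrow> phi t = phistep \<theta> (s t) (psi t)"
  unfolding phibar_def by (simp only: index_shift phiaux.simps Let_def)

lemma phi_below_s:
  assumes "t < T" "y < s t" shows "phi t x y = 0"
proof (cases "t < T - 1")
  case False
  with assms have "t = T - 1" by simp
  with assms show ?thesis using phi_last[of x y] by simp
qed (use assms in \<open>simp add: phi_step phistep_def\<close>)

lemma phi_at_grid:
  assumes "t < T - 1"
  shows "phi t \<theta> (z k) = (if z k < s t then 0 else psi t \<theta> (z k))"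
proof -
  have "z k - \<theta> < s t \<Longrightarrow> s t \<le> z k \<Longrightarrow> z k = s t"
    using Zg_less_imp_add_le[OF theta_pos s_in_Zg[OF assms] zg_in_Zg, of k] by fastforce
  then show ?thesis by (auto simp: phi_step[OF assms] phistep_def)
qed

lemma phi_series:
  fixes y :: real
  assumes "t < T - 1"
  defines "N \<equiv> \<lfloor>(y - s (Suc t)) / \<theta>\<rfloor>"
  shows "(\<lambda>n. phi (Suc t) x (y - z (int n - 1)) * fd t (int n - 1))
           sums (\<Sum>m\<in>{-1..N}. phi (Suc t) x (y - z m) * fd t m)"
proof (rule sums_shift_int)
  fix m assume "N < m"
  then have "(y - s (Suc t)) / \<theta> < real_of_int m" unfolding N_def by linarith
  then have "y - z m < s (Suc t)" using theta_pos by (simp add: zg_def divide_less_eq)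
  then show "phi (Suc t) x (y - z m) * fd t m = 0" using assms phi_below_s by simp
qed

lemma psi_eq_series:
  assumes "t < T - 1"
  shows "psi t x y = \<gamma> t * x + \<alpha> * (\<Sum>n. phi (Suc t) x (y - z (int n - 1)) * fd t (int n - 1))"
  using psistep_eq_sum[OF theta_pos] sums_unique[OF phi_series[OF assms]] by simp

lemma summable_phi_series:
  "t < T - 1 \<Longrightarrow> summable (\<lambda>n. phi (Suc t) x (y - z (int n - 1)) * fd t (int n - 1))"
  using phi_series sums_summable by blast

lemma phi_grid_nonneg:
  assumes "t < T" shows "0 \<le> phi t \<theta> (z m)"
proof -
  from assms have "t \<le> T - 1" by simp
  then show ?thesis
  proof (induction t arbitrary: m rule: inc_induct)
    case base
    show ?case using gamma_nonneg[of "T - 1"] theta_pos T_pos phi_last[of \<theta> "z m"] by simp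
  next
    case (step t)
    then have t: "t < T - 1" by simp
    then have "0 \<le> (\<Sum>j\<in>{-1..\<lfloor>(z m - s (Suc t)) / \<theta>\<rfloor>}. phi (Suc t) \<theta> (z m - z j) * fd t j)"
      using step.IH fd_nonneg[of t] by (intro sum_nonneg mult_nonneg_nonneg) (simp_all add: zg_diff)
    then have "0 \<le> psi t \<theta> (z m)"
      using alpha_nonneg gamma_nonneg[of t] theta_pos t by (simp add: psistep_eq_sum[OF theta_pos])
    then show ?case by (simp add: phi_at_grid[OF t])
  qed
qed

subsection \<open>The drop bound\<close>

text \<open>x' ranges over [z (k - 2), x] rather than [x - \<theta>, x], so that the grid points
  s t - \<theta> and z (k - 2) are admissible in the induction step.\<close>
definition V_drop_bounded :: "nat \<Rightarrow> bool" where
  "V_drop_bounded t \<longleftrightarrow> (\<forall>k x x'. z (k - 1) < x \<longrightarrow> x \<le> z k \<longrightarrow> z (k - 2) \<le> x' \<longrightarrow> x' \<le> x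
      \<longrightarrow> V t x' - V t x \<le> 2 * phi t \<theta> (z k))"

lemma H_diff_le:
  assumes t: "t < T - 1"
    and drop: "\<And>n. V (Suc t) (a - z (int n - 1)) - V (Suc t) (b - z (int n - 1))
                    \<le> 2 * phi (Suc t) \<theta> (y - z (int n - 1))"
  shows "H t a - H t b \<le> C t a - C t b + 2 * (psi t \<theta> y - \<gamma> t * \<theta>)"
proof -
  let ?v = "\<lambda>c n. V (Suc t) (c - z (int n - 1)) * fd t (int n - 1)"
  let ?p = "\<lambda>n. phi (Suc t) \<theta> (y - z (int n - 1)) * fd t (int n - 1)"
  have t2: "t + 2 \<le> T" using t by simp
  have "(\<Sum>n. ?v a n) - (\<Sum>n. ?v b n) = (\<Sum>n. ?v a n - ?v b n)"
    using suminf_diff[OF V_summable V_summable] t2 by simp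
  also have "\<dots> \<le> (\<Sum>n. 2 * ?p n)"
  proof (rule suminf_le)
    show "?v a n - ?v b n \<le> 2 * ?p n" for n
      using mult_right_mono[OF drop[of n] fd_nonneg[OF t2]] by (simp add: algebra_simps)
    show "summable (\<lambda>n. ?v a n - ?v b n)" using summable_diff V_summable t2 by blast
    show "summable (\<lambda>n. 2 * ?p n)" using summable_mult summable_phi_series[OF t] by blast
  qed
  also have "\<dots> = 2 * (\<Sum>n. ?p n)" using suminf_mult summable_phi_series[OF t] by blast
  finally have "\<alpha> * ((\<Sum>n. ?v a n) - (\<Sum>n. ?v b n)) \<le> \<alpha> * (2 * (\<Sum>n. ?p n))"
    using alpha_nonneg mult_left_mono by blast
  then show ?thesis using H_eq[OF t] psi_eq_series[OF t, of \<theta> y] by (simp add: algebra_simps)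
qed

lemma H_drop_le:
  assumes t: "t < T - 1" and IH: "V_drop_bounded (Suc t)"
    and x: "z (k - 1) < x" "x \<le> z k" and a: "z (k - 2) \<le> a" "a \<le> x"
  shows "H t a - H t x \<le> C t a - C t x + 2 * (psi t \<theta> (z k) - \<gamma> t * \<theta>)"
proof (rule H_diff_le[OF t])
  fix n
  let ?m = "int n - 1"
  have shift: "z (k - ?m - 1) = z (k - 1) - z ?m" "z (k - ?m - 2) = z (k - 2) - z ?m"
    "z (k - ?m) = z k - z ?m"
    by (simp_all add: zg_diff algebra_simps)
  have "z (k - ?m - 1) < x - z ?m" "x - z ?m \<le> z (k - ?m)" "z (k - ?m - 2) \<le> a - z ?m"
    "a - z ?m \<le> x - z ?m"
    unfolding shift using x a by auto
  with IH show "V (Suc t) (a - z ?m) - V (Suc t) (x - z ?m) \<le> 2 * phi (Suc t) \<theta> (z k - z ?m)"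
    unfolding V_drop_bounded_def shift(3)[symmetric] by blast
qed

lemma H_drop_le_psi:
  assumes t: "t < T - 1" and IH: "V_drop_bounded (Suc t)"
    and x: "z (k - 1) < x" "x \<le> z k" and a: "z (k - 2) \<le> a" "a \<le> x"
  shows "H t a - H t x \<le> 2 * psi t \<theta> (z k)"
proof -
  have "C t a - C t x \<le> \<gamma> t * \<bar>a - x\<bar>" using C_diff_le t by simp
  also have "\<dots> \<le> \<gamma> t * (2 * \<theta>)"
    using x a gamma_nonneg[of t] t by (intro mult_left_mono) (auto simp: zg_minus_two)
  finally show ?thesis using H_drop_le[OF assms] by simp
qed

lemma Ibar_le_s_all:
  assumes "t < T" shows "Ibar t \<le> s t"
proof (cases "t < T - 1")
  case False
  with assms have "t = T - 1" by simp
  then show ?thesis using last_period(4) by simp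
qed (rule Ibar_le_s)

lemma H_minus_C_eq_below_next_s:
  assumes t: "t < T - 1" and "a + \<theta> < s (Suc t)" "b + \<theta> < s (Suc t)"
  shows "H t a - C t a = H t b - C t b"
proof -
  have shift: "z (int n - 1) \<ge> - \<theta>" for n using theta_pos by (simp add: zg_def algebra_simps)
  have "a - z (int n - 1) < s (Suc t)" "b - z (int n - 1) < s (Suc t)" for n
    using assms(2,3) shift[of n] by linarith+
  then have "V (Suc t) (a - z (int n - 1)) = V (Suc t) (b - z (int n - 1))" for n
    by (simp add: V_eq)
  then show ?thesis by (simp add: H_eq[OF t])
qed

lemma H_S_add_K_le_near_Ibar:
  assumes t: "t < T - 1" and IH: "V_drop_bounded (Suc t)"
    and x: "z (k - 1) < x" "x \<le> z k" and Ibar: "z (k - 1) \<le> Ibar t" "Ibar t \<le> x"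
  shows "H t (S t) + K t - H t x \<le> 2 * psi t \<theta> (z k)"
proof -
  have "Suc t < T" using t by simp
  then have I: "I t + \<theta> < s (Suc t)" using I_add_theta_less[of t] Ibar_le_s_all by fastforce
  moreover have "z (k - 2) + \<theta> < s (Suc t)"
    using Ibar Ibar_le_I[OF t] I theta_pos by (simp add: zg_minus_one zg_minus_two)
  ultimately have HC: "H t (I t) - C t (I t) = H t (z (k - 2)) - C t (z (k - 2))"
    by (rule H_minus_C_eq_below_next_s[OF t])
  have "H t (z (k - 2)) - H t x \<le> C t (z (k - 2)) - C t x + 2 * (psi t \<theta> (z k) - \<gamma> t * \<theta>)"
    using x theta_pos by (intro H_drop_le[OF t IH x]) (auto simp: zg_minus_one zg_minus_two)
  with HC have drop: "H t (I t) - H t x \<le> C t (I t) - C t x + 2 * (psi t \<theta> (z k) - \<gamma> t * \<theta>)"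
    by simp
  have "C t (Ibar t - \<theta>) - C t x \<le> \<gamma> t * \<bar>Ibar t - \<theta> - x\<bar>" using C_diff_le t by simp
  also have "\<dots> \<le> \<gamma> t * (2 * \<theta>)"
    using x Ibar gamma_nonneg[of t] theta_pos t by (intro mult_left_mono) (auto simp: zg_minus_one)
  finally have lip: "C t (Ibar t - \<theta>) - C t x \<le> 2 * (\<gamma> t * \<theta>)" by simp
  have "H t (S t) + K t - H t x \<le> H t (I t) + K t - H t x" using H_S_le_H_I[OF t] by simp
  also have "\<dots> \<le> C t (I t) + K t - C t x + 2 * (psi t \<theta> (z k) - \<gamma> t * \<theta>)" using drop by simp
  also have "\<dots> \<le> C t (Ibar t - \<theta>) - C t x + 2 * (psi t \<theta> (z k) - \<gamma> t * \<theta>)"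
    using C_Ibar_minus_theta[OF t] by simp
  also have "\<dots> \<le> 2 * psi t \<theta> (z k)" using lip by simp
  finally show ?thesis .
qed

lemma H_S_add_K_le:
  assumes t: "t < T - 1" and IH: "V_drop_bounded (Suc t)"
    and x: "z (k - 1) < x" "x \<le> z k" and x': "z (k - 2) \<le> x'" "x' < s t" "s t \<le> x"
  shows "H t (S t) + K t - H t x \<le> 2 * psi t \<theta> (z k)"
proof -
  have s: "z (k - 1) \<le> s t"
    using Zg_ge_of_gt_pred[OF theta_pos s_in_Zg[OF t], of "k - 1"] x' by simp
  consider (K0) "K t = 0" | (gap) "K t \<noteq> 0" "Ibar t \<le> s t - \<theta>" | (near) "s t - \<theta> < Ibar t"
    by linarith
  then show ?thesis
  proof cases
    case K0
    have "H t (s t) - H t x \<le> 2 * psi t \<theta> (z k)"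
      using s x' x theta_pos by (intro H_drop_le_psi[OF t IH x]) (auto simp: zg_minus_one zg_minus_two)
    with K0 show ?thesis using s_eq_S[OF t] by simp
  next
    case gap
    have "H t (S t) + K t < H t (s t - \<theta>)"
      using H_below_s[OF t gap(1) Zg_minus_theta[OF s_in_Zg[OF t]] gap(2)] theta_pos by simp
    moreover have "H t (s t - \<theta>) - H t x \<le> 2 * psi t \<theta> (z k)"
      using s x' x theta_pos by (intro H_drop_le_psi[OF t IH x]) (auto simp: zg_minus_one zg_minus_two)
    ultimately show ?thesis by simp
  next
    case near
    with s have "z (k - 1 - 1) < Ibar t" by (simp add: zg_minus_one zg_minus_two)
    then have "z (k - 1) \<le> Ibar t" using Zg_ge_of_gt_pred[OF theta_pos Ibar_in_Zg[OF t]] by blast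
    then show ?thesis
      using Ibar_le_s[OF t] x' by (intro H_S_add_K_le_near_Ibar[OF t IH x]) simp_all
  qed
qed

lemma V_drop_bounded_step:
  assumes t: "t < T - 1" and IH: "V_drop_bounded (Suc t)"
  shows "V_drop_bounded t"
  unfolding V_drop_bounded_def
proof (intro allI impI)
  fix k x x'
  assume x: "z (k - 1) < x" "x \<le> z k" and x': "z (k - 2) \<le> x'" "x' \<le> x"
  have phi_eq: "phi t \<theta> (z k) = psi t \<theta> (z k)" if "s t \<le> x"
    using that x phi_at_grid[OF t] by simp
  consider (below) "x < s t" | (above) "s t \<le> x'" | (across) "x' < s t" "s t \<le> x" by linarith
  then show "V t x' - V t x \<le> 2 * phi t \<theta> (z k)"
  proof cases
    case below
    then show ?thesis using V_eq[of t] x' phi_grid_nonneg[of t k] t by simp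
  next
    case above
    then show ?thesis
      using V_eq[of t] x' phi_eq H_drop_le_psi[OF t IH x x'] by simp
  next
    case across
    then show ?thesis
      using V_eq[of t] phi_eq H_S_add_K_le[OF t IH x x'(1) across] by simp
  qed
qed

lemma V_last_eq: "V (T - 1) y = C (T - 1) (max y (s (T - 1)))"
proof -
  let ?t = "T - 1"
  have "?t < T" using T_pos by simp
  have "(\<gamma> ?t)-lipschitz_on UNIV (C ?t)"
    using C_lipschitz[OF \<open>?t < T\<close>] gamma_nonneg[OF \<open>?t < T\<close>]
    by (intro lipschitz_onI) (auto simp: dist_real_def)
  then have "C ?t (s ?t) = C ?t (S ?t) + K ?t"
    using C_sLast[OF K_nonneg C_at_bot lipschitz_on_continuous_on] \<open>?t < T\<close> last_period by simp
  then show ?thesis using V_eq[of ?t y] last_period(1) by (simp add: max_def)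
qed

lemma V_drop_bounded_last: "V_drop_bounded (T - 1)"
  unfolding V_drop_bounded_def
proof (intro allI impI)
  let ?t = "T - 1"
  fix k x x'
  assume x: "z (k - 1) < x" "x \<le> z k" and x': "z (k - 2) \<le> x'" "x' \<le> x"
  have t: "?t < T" using T_pos by simp
  show "V ?t x' - V ?t x \<le> 2 * phi ?t \<theta> (z k)"
  proof (cases "x < s ?t")
    case True
    then show ?thesis using V_last_eq x' phi_grid_nonneg[OF t, of k] by (simp add: max_def)
  next
    case False
    then have "phi ?t \<theta> (z k) = \<gamma> ?t * \<theta>" using x phi_last by simp
    moreover have "V ?t x' - V ?t x \<le> \<gamma> ?t * \<bar>max x' (s ?t) - max x (s ?t)\<bar>"
      using V_last_eq C_diff_le[OF t] by simp
    moreover have "\<gamma> ?t * \<bar>max x' (s ?t) - max x (s ?t)\<bar> \<le> \<gamma> ?t * (2 * \<theta>)"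
      using False x x' gamma_nonneg[OF t] by (intro mult_left_mono) (auto simp: zg_minus_two)
    ultimately show ?thesis by simp
  qed
qed

lemma V_drop_bounded:
  assumes "t < T" shows "V_drop_bounded t"
proof -
  from assms have "t \<le> T - 1" by simp
  then show ?thesis
    by (induction t rule: inc_induct) (rule V_drop_bounded_last, simp add: V_drop_bounded_step)
qed

end

theorem lemma4p10:
  fixes T :: nat and \<alpha> \<theta> :: real
    and c K \<gamma> :: "nat \<Rightarrow> real" and G :: "nat \<Rightarrow> real \<Rightarrow> real"
    and M :: "nat \<Rightarrow> real measure"
    and t :: nat and x x' :: real and k :: int
  defines "C \<equiv> Cfun \<alpha> c G M"
  defines "fd \<equiv> (\<lambda>t. fg \<theta> (M t))"
  assumes T2: "T \<ge> 2"
    and alpha: "0 < \<alpha>" "\<alpha> \<le> 1"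
    and theta: "\<theta> > 0"
    and Kpos: "\<forall>t<T. K t \<ge> 0"
    and Kdec: "\<forall>t. t + 2 \<le> T \<longrightarrow> K t \<ge> \<alpha> * K (Suc t)"
    and demand: "\<forall>t<T. prob_space (M t) \<and> sets (M t) = sets borel
                   \<and> (AE d in M t. 0 \<le> d) \<and> integrable (M t) (\<lambda>d. d)"
    and convex: "\<forall>t<T. convex_on UNIV (C t)
                   \<and> filterlim (C t) at_top at_top \<and> filterlim (C t) at_top at_bot"
    and finite_exp: "\<forall>t. t + 2 \<le> T \<longrightarrow> (\<forall>y. summable
                   (\<lambda>n. Vf \<theta> \<alpha> C K fd T (Suc t) (y - zg \<theta> (int n - 1)) * fd t (int n - 1)))"
    and lipschitz: "\<forall>t<T. \<gamma> t \<ge> 0 \<and> (\<forall>u v. \<bar>C t u - C t v\<bar> \<le> \<gamma> t * \<bar>u - v\<bar>)"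
    and xx': "0 \<le> x - x'" "x - x' \<le> \<theta>"
    and xk: "zg \<theta> (k - 1) < x" "x \<le> zg \<theta> k"
    and t: "t < T"
  shows "Vf \<theta> \<alpha> C K fd T t x' - Vf \<theta> \<alpha> C K fd T t x
           \<le> 2 * phibar \<theta> \<alpha> \<gamma> fd (sf \<theta> \<alpha> C K fd T) T t \<theta> (zg \<theta> k)"
proof -
  have fd_nonneg: "fd t' n \<ge> 0" if "t' + 2 \<le> T" for t' n
    using demand that theta unfolding fd_def by (intro fg_nonneg) (auto intro: prob_space.finite_measure)
  interpret grid_inventory \<theta> \<alpha> T C K \<gamma> fd
    using theta alpha T2 Kpos lipschitz convex fd_nonneg finite_exp by unfold_locales auto
  have "zg \<theta> (k - 2) \<le> x'" using xk xx' by (simp add: zg_minus_one zg_minus_two)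
  then show ?thesis using V_drop_bounded[OF t] xk xx' unfolding V_drop_bounded_def by simp
qed

end
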